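(* Let $I=(p_t)_{t\in[n]}$ be an instance and $\hat I=(\hat p_t)_{t\in[n]}$ a prediction such that $\min\{p_t,\hat p_t\}>0$ for some $t$. Then (Lipschitzness) $|\mathrm{opt}(I)-\mathrm{opt}(\hat I)|\le\eta(I,\hat I)$, and (monotonicity) for every $S\subseteq[n]$, letting $\hat I_S$ be the instance with $t$-th entry $p_t$ for $t\in S$ and $\hat p_t$ for $t\notin S$, we have $\eta(I,\hat I)\ge\eta(I,\hat I_S)$.
   Context: Fix a real parameter $d>0$. An instance is a finite sequence $I=(p_t)_{t\in[T]}$ of nonnegative reals; instances of different lengths are compared by padding with zeros. A solution is a finite set $X=\{x_1<\dots<x_k\}\subseteq[T]$; it is feasible for $I$ if either all $p_t=0$, or $X\ne\emptyset$ and $\max X\ge\max\{t:p_t>0\}$. With $x_0:=0$, $F(I,X)=|X|+\frac1d\sum_{i=1}^{k}\sum_{t=x_{i-1}+1}^{x_i}p_t(x_i-t)$, and $\mathrm{opt}(I)=\min\{F(I,X): X\text{ feasible}\}$. For $a\le b$, the subinstance $I\langle a,b\rangle=(p_t)_{t\in\{a,\dots,b\}}$ is an instance on time set $\{a,\dots,b\}$ (solutions are subsets of $\{a,\dots,b\}$, cost formula with $x_0:=a-1$). For an actual instance $I=(p_t)$ and a predicted instance $\hat I=(\hat p_t)$ on the same time set, $O(I,\hat I)=(\max\{p_t,\hat p_t\})_t$ and $U(I,\hat I)=(\min\{p_t,\hat p_t\})_t$. For an interval $L=\{a,\dots,b\}$, $\tau(L,I,\hat I)=\mathrm{opt}(O(I\langle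 a,b\rangle,\hat I\langle a,b\rangle))-\mathrm{opt}(U(I\langle a,b\rangle,\hat I\langle a,b\rangle))$. A partition of $[n]$ into consecutive intervals $L_1,\dots,L_m$ is non-empty for $U(I,\hat I)$ if every $L_i$ contains some $t$ with $\min\{p_t,\hat p_t\}>0$; let $\Pi(U(I,\hat I))$ be the set of such partitions. The error measure is $\eta(I,\hat I)=\max_{\mathcal P\in\Pi(U(I,\hat I))}\sum_{L\in\mathcal P}\tau(L,I,\hat I)$. *)

theory Defs
  imports Complex_Main
begin

text \<open>An instance on the time set {a..b} is a function p :: nat \<Rightarrow> real
  (only its values on {a..b} matter). A solution is a set X \<subseteq> {a..b}.\<close>

definition feasible :: "nat \<Rightarrow> nat \<Rightarrow> (nat \<Rightarrow> real) \<Rightarrow> nat set \<Rightarrow> bool" where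
  "feasible a b p X \<longleftrightarrow> X \<subseteq> {a..b} \<and>
     ((\<forall>t\<in>{a..b}. p t = 0) \<or>
      (X \<noteq> {} \<and> (\<forall>t\<in>{a..b}. p t > 0 \<longrightarrow> t \<le> Max X)))"

definition cost :: "real \<Rightarrow> nat \<Rightarrow> nat \<Rightarrow> (nat \<Rightarrow> real) \<Rightarrow> nat set \<Rightarrow> real" where
  "cost d a b p X = real (card X) + (1 / d) *
     (\<Sum>t\<in>{t\<in>{a..b}. \<exists>x\<in>X. t \<le> x}. p t * (real (Min {x\<in>X. t \<le> x}) - real t))"

definition opt :: "real \<Rightarrow> nat \<Rightarrow> nat \<Rightarrow> (nat \<Rightarrow> real) \<Rightarrow> real" where
  "opt d a b p = Min (cost d a b p ` {X. feasible a b p X})"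

definition Oinst :: "(nat \<Rightarrow> real) \<Rightarrow> (nat \<Rightarrow> real) \<Rightarrow> nat \<Rightarrow> real" where
  "Oinst p q = (\<lambda>t. max (p t) (q t))"

definition Uinst :: "(nat \<Rightarrow> real) \<Rightarrow> (nat \<Rightarrow> real) \<Rightarrow> nat \<Rightarrow> real" where
  "Uinst p q = (\<lambda>t. min (p t) (q t))"

definition tau :: "real \<Rightarrow> nat set \<Rightarrow> (nat \<Rightarrow> real) \<Rightarrow> (nat \<Rightarrow> real) \<Rightarrow> real" where
  "tau d L p q = opt d (Min L) (Max L) (Oinst p q) - opt d (Min L) (Max L) (Uinst p q)"

definition interval_partition :: "nat \<Rightarrow> nat set set \<Rightarrow> bool" where
  "interval_partition n P \<longleftrightarrow>
     (\<forall>L\<in>P. \<exists>a b. a \<le> b \<and> L = {a..b}) \<and> \<Union>P = {1..n} \<and>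
     (\<forall>L\<in>P. \<forall>L'\<in>P. L \<noteq> L' \<longrightarrow> L \<inter> L' = {})"

definition nonempty_partitions :: "nat \<Rightarrow> (nat \<Rightarrow> real) \<Rightarrow> nat set set set" where
  "nonempty_partitions n u = {P. interval_partition n P \<and> (\<forall>L\<in>P. \<exists>t\<in>L. u t > 0)}"

definition eta :: "real \<Rightarrow> nat \<Rightarrow> (nat \<Rightarrow> real) \<Rightarrow> (nat \<Rightarrow> real) \<Rightarrow> real" where
  "eta d n p q = Max ((\<lambda>P. \<Sum>L\<in>P. tau d L p q) ` nonempty_partitions n (Uinst p q))"

end

theory Submission
  imports Defs
begin

text \<open>Since opt is monotone in the instance, opt I and opt \<open>\<hat>I\<close> both lie between
  opt U and opt O, so their difference is at most \<open>\<tau>\<close> of the whole horizon, i.e. the value of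
  the one-block partition.

  Replacing \<open>\<hat>I\<close> by \<open>\<hat>I\<^sub>S\<close> shrinks O and enlarges U pointwise, hence decreases \<open>\<tau>\<close> of every
  block. A partition that is optimal for \<open>\<eta>(I, \<hat>I\<^sub>S)\<close> may however contain blocks on which
  the old U vanishes. Such a block is merged with a neighbour: cutting an optimal solution of
  the merged block at the boundary costs at most one extra point, while the dropped block
  contributed at most opt O - 1 to \<open>\<eta>(I, \<hat>I\<^sub>S)\<close>, because its new U has a positive job and
  therefore an optimum of at least 1.\<close>

lemma Min_atLeastAtMost [simp]: "(a::nat) \<le> b \<Longrightarrow> Min {a..b} = a"
  by (rule Min_eqI) auto

lemma Max_atLeastAtMost [simp]: "(a::nat) \<le> b \<Longrightarrow> Max {a..b} = b"
  by (rule Max_eqI) auto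

lemma Min_ge_in:
  assumes "finite X" "\<exists>x\<in>X. t \<le> x"
  shows "t \<le> Min {x\<in>X. t \<le> x}" "Min {x\<in>X. t \<le> x} \<in> X"
proof -
  have "Min {x\<in>X. t \<le> x} \<in> {x\<in>X. t \<le> x}" using assms by (intro Min_in) auto
  then show "t \<le> Min {x\<in>X. t \<le> x}" "Min {x\<in>X. t \<le> x} \<in> X" by auto
qed

subsection \<open>Solutions and optimal cost\<close>

definition delay :: "nat \<Rightarrow> nat \<Rightarrow> (nat \<Rightarrow> real) \<Rightarrow> nat set \<Rightarrow> real" where
  "delay a b p X = (\<Sum>t\<in>{t\<in>{a..b}. \<exists>x\<in>X. t \<le> x}. p t * (real (Min {x\<in>X. t \<le> x}) - real t))"

lemma cost_eq_card_plus_delay: "cost d a b p X = real (card X) + delay a b p X / d"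
  by (simp add: cost_def delay_def)

lemma delay_mono:
  assumes "finite X" "\<forall>t\<in>{a..b}. p t \<le> p' t"
  shows "delay a b p X \<le> delay a b p' X"
  unfolding delay_def
proof (rule sum_mono)
  fix t assume t: "t \<in> {t\<in>{a..b}. \<exists>x\<in>X. t \<le> x}"
  then have "t \<le> Min {x\<in>X. t \<le> x}" using Min_ge_in[OF assms(1)] by auto
  with t assms(2) show "p t * (real (Min {x\<in>X. t \<le> x}) - real t)
      \<le> p' t * (real (Min {x\<in>X. t \<le> x}) - real t)"
    by (intro mult_right_mono) auto
qed

lemma delay_nonneg: "finite X \<Longrightarrow> \<forall>t\<in>{a..b}. 0 \<le> p t \<Longrightarrow> 0 \<le> delay a b p X"
  using delay_mono[of X a b "\<lambda>_. 0" p] by (simp add: delay_def)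

lemma delay_split:
  assumes "a \<le> Suc b" "b \<le> c"
  shows "delay a c p X = delay a b p X + delay (Suc b) c p X"
proof -
  have split: "{t\<in>{a..c}. \<exists>x\<in>X. t \<le> x}
      = {t\<in>{a..b}. \<exists>x\<in>X. t \<le> x} \<union> {t\<in>{Suc b..c}. \<exists>x\<in>X. t \<le> x}"
    using assms by auto
  show ?thesis
    unfolding delay_def split by (rule sum.union_disjoint) auto
qed

lemma delay_Int_atLeast: "delay a b p (X \<inter> {a..}) = delay a b p X"
proof -
  have "{x\<in>X \<inter> {a..}. t \<le> x} = {x\<in>X. t \<le> x}" if "a \<le> t" for t
    using that by auto
  then show ?thesis
    unfolding delay_def by (intro sum.cong) auto
qed

lemma delay_close_at_end_le:
  assumes "finite X" "b \<le> Max X" "X \<noteq> {}" "\<forall>t\<in>{a..b}. 0 \<le> p t"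
  shows "delay a b p (insert b (X \<inter> {..b})) \<le> delay a b p X"
proof -
  let ?Y = "insert b (X \<inter> {..b})"
  have covered: "\<exists>x\<in>X. t \<le> x" if "t \<in> {a..b}" for t
    using that Max_in[OF assms(1,3)] assms(2) by (auto intro!: bexI[of _ "Max X"])
  have filters: "{t\<in>{a..b}. \<exists>x\<in>X. t \<le> x} = {a..b}" "{t\<in>{a..b}. \<exists>x\<in>?Y. t \<le> x} = {a..b}"
    using covered by auto
  have "p t * (real (Min {x\<in>?Y. t \<le> x}) - real t) \<le> p t * (real (Min {x\<in>X. t \<le> x}) - real t)"
    if t: "t \<in> {a..b}" for t
  proof -
    define m where "m = Min {x\<in>X. t \<le> x}"
    have m: "t \<le> m" "m \<in> X" using Min_ge_in[OF assms(1) covered[OF t]] by (auto simp: m_def)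
    have "Min {x\<in>?Y. t \<le> x} \<le> (if m \<le> b then m else b)"
      using m t assms(1) by (intro Min_le) auto
    then have "Min {x\<in>?Y. t \<le> x} \<le> m" by (auto split: if_splits)
    then show ?thesis using t assms(4) by (intro mult_left_mono) (auto simp: m_def)
  qed
  then show ?thesis
    unfolding delay_def filters by (rule sum_mono)
qed

lemma feasible_imp_subset: "feasible a b p X \<Longrightarrow> X \<subseteq> {a..b}"
  by (simp add: feasible_def)

lemma feasible_atLeastAtMost: "feasible a b p {a..b}"
  unfolding feasible_def by (cases "a \<le> b") (auto intro!: Max_ge)

lemma finite_feasible: "finite {X. feasible a b p X}"
  by (rule finite_subset[of _ "Pow {a..b}"]) (auto simp: feasible_def)

lemma opt_le_cost: "feasible a b p X \<Longrightarrow> opt d a b p \<le> cost d a b p X"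
  unfolding opt_def by (rule Min_le) (auto intro: finite_feasible)

lemma opt_attained:
  obtains X where "feasible a b p X" "opt d a b p = cost d a b p X"
proof -
  have "opt d a b p \<in> cost d a b p ` {X. feasible a b p X}"
    unfolding opt_def using finite_feasible feasible_atLeastAtMost by (intro Min_in) blast+
  then show ?thesis using that by blast
qed

lemma opt_mono:
  assumes "d > 0" "\<forall>t\<in>{a..b}. 0 \<le> p t \<and> p t \<le> p' t"
  shows "opt d a b p \<le> opt d a b p'"
proof -
  obtain X where X: "feasible a b p' X" "opt d a b p' = cost d a b p' X"
    by (rule opt_attained)
  have "finite X" using feasible_imp_subset[OF X(1)] finite_subset by blast
  have "feasible a b p X"
    using X(1) assms(2) unfolding feasible_def by (metis order_antisym order_less_le_trans)
  then have "opt d a b p \<le> cost d a b p X" by (rule opt_le_cost)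
  also have "\<dots> \<le> cost d a b p' X"
    using delay_mono[OF \<open>finite X\<close>, of a b p p'] assms
    by (simp add: cost_eq_card_plus_delay divide_right_mono)
  finally show ?thesis using X(2) by simp
qed

lemma one_le_opt:
  assumes "d > 0" "\<forall>t\<in>{a..b}. 0 \<le> p t" "t\<^sub>0 \<in> {a..b}" "p t\<^sub>0 > 0"
  shows "1 \<le> opt d a b p"
proof -
  obtain X where X: "feasible a b p X" "opt d a b p = cost d a b p X"
    by (rule opt_attained)
  have "finite X" using feasible_imp_subset[OF X(1)] finite_subset by blast
  moreover have "X \<noteq> {}" using X(1) assms(3,4) unfolding feasible_def by auto
  ultimately have "1 \<le> card X" by (simp add: Suc_leI card_gt_0_iff)
  moreover have "0 \<le> delay a b p X / d"
    using delay_nonneg[OF \<open>finite X\<close> assms(2)] assms(1) by simp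
  ultimately show ?thesis using X(2) assms(1) by (simp add: cost_eq_card_plus_delay)
qed

lemma opt_le_opt_if_vanishing_outside:
  assumes "a \<le> a'" "c' \<le> c" "\<forall>t\<in>{a..c} - {a'..c'}. p t = 0"
  shows "opt d a c p \<le> opt d a' c' p"
proof -
  obtain X where X: "feasible a' c' p X" "opt d a' c' p = cost d a' c' p X"
    by (rule opt_attained)
  have "feasible a c p X"
    using X(1) assms unfolding feasible_def by (cases "\<forall>t\<in>{a'..c'}. p t = 0") fastforce+
  then have "opt d a c p \<le> cost d a c p X" by (rule opt_le_cost)
  also have "cost d a c p X = cost d a' c' p X"
  proof -
    have "delay a c p X = delay a' c' p X"
      unfolding delay_def by (rule sum.mono_neutral_right) (use assms in auto)
    then show ?thesis by (simp add: cost_eq_card_plus_delay)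
  qed
  finally show ?thesis using X(2) by simp
qed

lemma card_split_at_le:
  assumes "finite X"
  shows "card (insert b (X \<inter> {..b})) + card (X \<inter> {Suc b..}) \<le> card X + 1"
proof -
  have "card (insert b (X \<inter> {..b})) \<le> card (X \<inter> {..b}) + 1"
    using assms by (simp add: card_insert_if)
  moreover have "card (X \<inter> {..b}) + card (X \<inter> {Suc b..}) = card X"
    using assms by (subst card_Un_disjoint[symmetric]) (auto intro: arg_cong[where f = card])
  ultimately show ?thesis by linarith
qed

lemma opt_split_le:
  assumes d: "d > 0" and "a \<le> b" "b < c" and nonneg: "\<forall>t\<in>{a..c}. 0 \<le> p t"
    and "t\<^sub>0 \<in> {Suc b..c}" "p t\<^sub>0 > 0"
  shows "opt d a b p + opt d (Suc b) c p \<le> opt d a c p + 1"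
proof -
  obtain X where X: "feasible a c p X" "opt d a c p = cost d a c p X"
    by (rule opt_attained)
  have X_sub: "X \<subseteq> {a..c}" using feasible_imp_subset[OF X(1)] .
  then have "finite X" using finite_subset by blast
  have "X \<noteq> {}" and covers: "\<forall>t\<in>{a..c}. p t > 0 \<longrightarrow> t \<le> Max X"
    using X(1) assms unfolding feasible_def by auto
  then have "Suc b \<le> Max X" using assms by force
  define X\<^sub>1 where "X\<^sub>1 = insert b (X \<inter> {..b})"
  define X\<^sub>2 where "X\<^sub>2 = X \<inter> {Suc b..}"
  have "Max X \<in> X\<^sub>2" using Max_in[OF \<open>finite X\<close> \<open>X \<noteq> {}\<close>] \<open>Suc b \<le> Max X\<close> by (simp add: X\<^sub>2_def)
  then have "Max X \<le> Max X\<^sub>2" using \<open>finite X\<close> by (simp add: X\<^sub>2_def)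
  then have "feasible (Suc b) c p X\<^sub>2"
    using X_sub covers \<open>Max X \<in> X\<^sub>2\<close> \<open>a \<le> b\<close> unfolding feasible_def X\<^sub>2_def by fastforce
  then have opt\<^sub>2: "opt d (Suc b) c p \<le> cost d (Suc b) c p X\<^sub>2" by (rule opt_le_cost)
  have "X\<^sub>1 \<subseteq> {a..b}" "X\<^sub>1 \<noteq> {}" "b \<le> Max X\<^sub>1"
    using X_sub \<open>finite X\<close> \<open>a \<le> b\<close> by (auto simp: X\<^sub>1_def)
  then have "feasible a b p X\<^sub>1" unfolding feasible_def by auto
  then have opt\<^sub>1: "opt d a b p \<le> cost d a b p X\<^sub>1" by (rule opt_le_cost)
  have card: "real (card X\<^sub>1) + real (card X\<^sub>2) \<le> real (card X) + 1"
    using card_split_at_le[OF \<open>finite X\<close>, of b] unfolding X\<^sub>1_def X\<^sub>2_def by linarith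
  have "delay a b p X\<^sub>1 \<le> delay a b p X"
    using delay_close_at_end_le[OF \<open>finite X\<close> _ \<open>X \<noteq> {}\<close>] \<open>Suc b \<le> Max X\<close> nonneg \<open>b < c\<close>
    by (simp add: X\<^sub>1_def)
  moreover have "delay (Suc b) c p X\<^sub>2 = delay (Suc b) c p X"
    by (simp add: X\<^sub>2_def delay_Int_atLeast)
  ultimately have "delay a b p X\<^sub>1 + delay (Suc b) c p X\<^sub>2 \<le> delay a c p X"
    using delay_split[of a b c p X] assms by simp
  then have "(delay a b p X\<^sub>1 + delay (Suc b) c p X\<^sub>2) / d \<le> delay a c p X / d"
    using d by (simp add: divide_right_mono)
  then have "cost d a b p X\<^sub>1 + cost d (Suc b) c p X\<^sub>2 \<le> cost d a c p X + 1"
    using card by (simp add: cost_eq_card_plus_delay add_divide_distrib)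
  then show ?thesis using opt\<^sub>1 opt\<^sub>2 X(2) by linarith
qed

subsection \<open>Partitions into intervals\<close>

lemma interval_partition_finite: "interval_partition n P \<Longrightarrow> finite P"
  unfolding interval_partition_def by (rule finite_subset[of _ "Pow {1..n}"]) auto

lemma interval_partition_subset: "interval_partition n P \<Longrightarrow> L \<in> P \<Longrightarrow> L \<subseteq> {1..n}"
  unfolding interval_partition_def by blast

lemma interval_partition_interval:
  "interval_partition n P \<Longrightarrow> L \<in> P \<Longrightarrow> \<exists>a b. a \<le> b \<and> L = {a..b}"
  unfolding interval_partition_def by blast

lemma interval_partition_unique:
  "interval_partition n P \<Longrightarrow> L \<in> P \<Longrightarrow> M \<in> P \<Longrightarrow> t \<in> L \<Longrightarrow> t \<in> M \<Longrightarrow> L = M"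
  unfolding interval_partition_def by blast

lemma interval_partition_merge_adjacent:
  assumes P: "interval_partition n P" and "{x..y} \<in> P" "{Suc y..z} \<in> P" "x \<le> y" "y < z"
  shows "interval_partition n (insert {x..z} (P - {{x..y}, {Suc y..z}}))"
proof -
  have split: "{x..z} = {x..y} \<union> {Suc y..z}" using assms(4,5) by auto
  have apart: "C \<inter> {x..z} = {}" if "C \<in> P - {{x..y}, {Suc y..z}}" for C
    using that interval_partition_unique[OF P _ assms(2)] interval_partition_unique[OF P _ assms(3)]
    unfolding split by blast
  have "\<Union>(insert {x..z} (P - {{x..y}, {Suc y..z}})) = \<Union>P"
    unfolding split using assms(2,3) by blast
  moreover have "x \<le> z" using assms(4,5) by simp
  moreover have "A \<inter> B = {}" if "A \<in> P - {{x..y}, {Suc y..z}}" "B \<in> P - {{x..y}, {Suc y..z}}" "A \<noteq> B" for A B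
    using P that unfolding interval_partition_def by blast
  ultimately show ?thesis
    using P apart unfolding interval_partition_def by (auto simp: Int_commute)
qed

lemma interval_partition_merge_adjacent_sum:
  fixes h :: "nat set \<Rightarrow> real"
  assumes P: "interval_partition n P" and "{x..y} \<in> P" "{Suc y..z} \<in> P" "x \<le> y" "y < z"
  defines "P' \<equiv> insert {x..z} (P - {{x..y}, {Suc y..z}})"
  shows "card P' < card P" "sum h P' = sum h P - h {x..y} - h {Suc y..z} + h {x..z}"
proof -
  have "finite P" using P by (rule interval_partition_finite)
  have LR: "{x..y} \<noteq> {Suc y..z}" using assms(4) by (metis atLeastAtMost_iff le_refl not_less_eq_eq)
  have "{x..z} \<notin> P - {{x..y}, {Suc y..z}}"
    using interval_partition_unique[OF P _ assms(2), of "{x..z}" x] assms(4,5) by auto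
  moreover have "card (P - {{x..y}, {Suc y..z}}) = card P - 2"
    using assms(2,3) LR \<open>finite P\<close> by (simp add: card_Diff_subset)
  moreover have "2 \<le> card P"
    using card_mono[OF \<open>finite P\<close>, of "{{x..y}, {Suc y..z}}"] assms(2,3) LR by simp
  moreover have "sum h P = sum h (P - {{x..y}, {Suc y..z}}) + h {x..y} + h {Suc y..z}"
    using sum.subset_diff[of "{{x..y}, {Suc y..z}}" P h] assms(2,3) LR \<open>finite P\<close> by simp
  ultimately show "card P' < card P" "sum h P' = sum h P - h {x..y} - h {Suc y..z} + h {x..z}"
    using \<open>finite P\<close> by (simp_all add: P'_def)
qed

lemma interval_partition_neighbour:
  assumes P: "interval_partition n P" and L: "{a..b} \<in> P" "a \<le> b" "{a..b} \<noteq> {1..n}"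
  obtains c where "b < c" "{Suc b..c} \<in> P"
    | a' where "a' < a" "{a'..a - 1} \<in> P"
proof -
  have "1 \<le> a" "b \<le> n" using interval_partition_subset[OF P L(1)] L(2) by auto
  have cover: "\<exists>M\<in>P. t \<in> M" if "t \<in> {1..n}" for t
    using P that unfolding interval_partition_def by blast
  from L(3) \<open>1 \<le> a\<close> \<open>b \<le> n\<close> consider "b < n" | "1 < a" by fastforce
  then show thesis
  proof cases
    case 1
    then obtain M where M: "M \<in> P" "Suc b \<in> M" using cover[of "Suc b"] \<open>1 \<le> a\<close> L(2) by auto
    obtain a' c where M_eq: "M = {a'..c}" using interval_partition_interval[OF P M(1)] by blast
    have "\<not> a' \<le> b"
    proof
      assume "a' \<le> b"
      then have "M = {a..b}"
        using interval_partition_unique[OF P M(1) L(1), of b] M(2) L(2) M_eq by auto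
      then show False using M(2) by simp
    qed
    then have "M = {Suc b..c}" "b < c" using M(2) M_eq by auto
    then show thesis using that(1) M(1) by blast
  next
    case 2
    then obtain M where M: "M \<in> P" "a - 1 \<in> M" using cover[of "a - 1"] \<open>b \<le> n\<close> L(2) by force
    obtain a' c where M_eq: "M = {a'..c}" using interval_partition_interval[OF P M(1)] by blast
    have "\<not> a \<le> c"
    proof
      assume "a \<le> c"
      then have "M = {a..b}"
        using interval_partition_unique[OF P M(1) L(1), of a] M(2) L(2) M_eq 2 by auto
      then show False using M(2) 2 by auto
    qed
    then have "M = {a'..a - 1}" "a' < a" using M(2) M_eq 2 by auto
    then show thesis using that(2) M(1) by blast
  qed
qed

lemma nonempty_partition_merge:
  fixes h :: "nat set \<Rightarrow> real" and f g :: "nat \<Rightarrow> real"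
  assumes merge: "\<And>a b c. 1 \<le> a \<Longrightarrow> a \<le> b \<Longrightarrow> b < c \<Longrightarrow> c \<le> n \<Longrightarrow>
        \<exists>t\<in>{a..b}. f t > 0 \<Longrightarrow> \<exists>t\<in>{Suc b..c}. f t > 0 \<Longrightarrow>
        \<not> (\<exists>t\<in>{a..b}. g t > 0) \<or> \<not> (\<exists>t\<in>{Suc b..c}. g t > 0) \<Longrightarrow>
        h {a..b} + h {Suc b..c} \<le> h {a..c}"
    and g: "\<exists>t\<in>{1..n}. g t > 0"
    and "P \<in> nonempty_partitions n f"
  shows "\<exists>P'\<in>nonempty_partitions n g. sum h P \<le> sum h P'"
  using assms(3)
proof (induction "card P" arbitrary: P rule: less_induct)
  case less
  then have P: "interval_partition n P" and f: "\<forall>L\<in>P. \<exists>t\<in>L. f t > 0"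
    by (auto simp: nonempty_partitions_def)
  have merged: "\<exists>P'\<in>nonempty_partitions n g. sum h P \<le> sum h P'"
    if L: "{x..y} \<in> P" and R: "{Suc y..z} \<in> P" and "x \<le> y" "y < z"
      and bad: "\<not> (\<exists>t\<in>{x..y}. g t > 0) \<or> \<not> (\<exists>t\<in>{Suc y..z}. g t > 0)" for x y z
  proof -
    define Q where "Q = insert {x..z} (P - {{x..y}, {Suc y..z}})"
    have "1 \<le> x" "z \<le> n"
      using interval_partition_subset[OF P L] interval_partition_subset[OF P R] \<open>x \<le> y\<close> \<open>y < z\<close>
      by auto
    moreover have "\<exists>t\<in>{x..y}. f t > 0" "\<exists>t\<in>{Suc y..z}. f t > 0" using f L R by auto
    ultimately have "h {x..y} + h {Suc y..z} \<le> h {x..z}"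
      using merge \<open>x \<le> y\<close> \<open>y < z\<close> bad by blast
    moreover have "card Q < card P" "sum h Q = sum h P - h {x..y} - h {Suc y..z} + h {x..z}"
      using interval_partition_merge_adjacent_sum[OF P L R \<open>x \<le> y\<close> \<open>y < z\<close>] by (simp_all add: Q_def)
    moreover have "Q \<in> nonempty_partitions n f"
      using interval_partition_merge_adjacent[OF P L R \<open>x \<le> y\<close> \<open>y < z\<close>] f \<open>\<exists>t\<in>{x..y}. f t > 0\<close> \<open>y < z\<close>
      by (force simp: Q_def nonempty_partitions_def)
    ultimately obtain P' where "P' \<in> nonempty_partitions n g" "sum h Q \<le> sum h P'"
      "sum h P \<le> sum h Q"
      using less.hyps by fastforce
    then show ?thesis by (meson order_trans)
  qed
  show ?case
  proof (cases "\<forall>L\<in>P. \<exists>t\<in>L. g t > 0")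
    case True
    then show ?thesis using P by (auto simp: nonempty_partitions_def)
  next
    case False
    then obtain a b where L: "{a..b} \<in> P" "a \<le> b" and bad: "\<not> (\<exists>t\<in>{a..b}. g t > 0)"
      using interval_partition_interval[OF P] by blast
    then have "{a..b} \<noteq> {1..n}" using g by auto
    then show ?thesis
    proof (rule interval_partition_neighbour[OF P L])
      fix c assume "b < c" "{Suc b..c} \<in> P"
      then show ?thesis using merged[OF L(1) _ L(2)] bad by blast
    next
      fix a' assume "a' < a" "{a'..a - 1} \<in> P"
      then show ?thesis using merged[of a' "a - 1" b] L bad by auto
    qed
  qed
qed

lemma finite_nonempty_partitions: "finite (nonempty_partitions n u)"
  by (rule finite_subset[of _ "Pow (Pow {1..n})"])
     (auto simp: nonempty_partitions_def interval_partition_def)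

lemma whole_interval_nonempty_partition:
  "t \<in> {1..n} \<Longrightarrow> u t > 0 \<Longrightarrow> {{1..n}} \<in> nonempty_partitions n u"
  unfolding nonempty_partitions_def interval_partition_def by auto

lemma sum_tau_le_eta:
  "P \<in> nonempty_partitions n (Uinst p q) \<Longrightarrow> (\<Sum>L\<in>P. tau d L p q) \<le> eta d n p q"
  unfolding eta_def using finite_nonempty_partitions by (intro Max_ge) auto

lemma eta_attained:
  assumes "\<exists>t\<in>{1..n}. Uinst p q t > 0"
  obtains P where "P \<in> nonempty_partitions n (Uinst p q)" "eta d n p q = (\<Sum>L\<in>P. tau d L p q)"
proof -
  have "eta d n p q \<in> (\<lambda>P. \<Sum>L\<in>P. tau d L p q) ` nonempty_partitions n (Uinst p q)"
    unfolding eta_def using finite_nonempty_partitions whole_interval_nonempty_partition assms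
    by (intro Max_in) blast+
  then show ?thesis using that by blast
qed

subsection \<open>The error measure\<close>

definition squeezed_on :: "nat set \<Rightarrow> (nat \<Rightarrow> real) \<Rightarrow> (nat \<Rightarrow> real) \<Rightarrow> (nat \<Rightarrow> real) \<Rightarrow> (nat \<Rightarrow> real) \<Rightarrow> bool"
  where "squeezed_on A p' q' p q \<longleftrightarrow>
    (\<forall>t\<in>A. 0 \<le> Uinst p q t \<and> Uinst p q t \<le> Uinst p' q' t \<and> Oinst p' q' t \<le> Oinst p q t)"

lemma squeezed_on_subset: "squeezed_on A p' q' p q \<Longrightarrow> B \<subseteq> A \<Longrightarrow> squeezed_on B p' q' p q"
  unfolding squeezed_on_def by blast

text \<open>On a block without a positive job of U, opt U' \<open>\<ge>\<close> 1 makes opt O - 1 an upper bound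
  for the \<open>\<tau>\<close> of the squeezed pair; this slack of 1 pays for merging the block.\<close>
definition tau_bound :: "real \<Rightarrow> (nat \<Rightarrow> real) \<Rightarrow> (nat \<Rightarrow> real) \<Rightarrow> nat set \<Rightarrow> real" where
  "tau_bound d p q L = (if \<exists>t\<in>L. Uinst p q t > 0 then tau d L p q
     else opt d (Min L) (Max L) (Oinst p q) - 1)"

lemma tau_le_tau_bound:
  assumes d: "d > 0" and "a \<le> b" and sq: "squeezed_on {a..b} p' q' p q"
    and "\<exists>t\<in>{a..b}. Uinst p' q' t > 0"
  shows "tau d {a..b} p' q' \<le> tau_bound d p q {a..b}"
proof -
  have pointwise: "\<forall>t\<in>{a..b}. 0 \<le> Uinst p q t \<and> Uinst p q t \<le> Uinst p' q' t
      \<and> 0 \<le> Oinst p' q' t \<and> Oinst p' q' t \<le> Oinst p q t"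
    using sq unfolding squeezed_on_def Uinst_def Oinst_def by fastforce
  have "opt d a b (Oinst p' q') \<le> opt d a b (Oinst p q)"
    using opt_mono[OF d] pointwise by blast
  moreover have "opt d a b (Uinst p q) \<le> opt d a b (Uinst p' q')"
    using opt_mono[OF d] pointwise by blast
  moreover have "1 \<le> opt d a b (Uinst p' q')"
  proof -
    obtain t\<^sub>0 where "t\<^sub>0 \<in> {a..b}" "Uinst p' q' t\<^sub>0 > 0" using assms(4) by blast
    moreover have "\<forall>t\<in>{a..b}. 0 \<le> Uinst p' q' t" using pointwise by force
    ultimately show ?thesis using one_le_opt[OF d] by blast
  qed
  ultimately show ?thesis
    using \<open>a \<le> b\<close> by (simp add: tau_def tau_bound_def)
qed

lemma tau_bound_merge:
  assumes d: "d > 0" and "a \<le> b" "b < c" and sq: "squeezed_on {a..c} p' q' p q"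
    and "\<exists>t\<in>{Suc b..c}. Uinst p' q' t > 0"
    and "\<not> (\<exists>t\<in>{a..b}. Uinst p q t > 0) \<or> \<not> (\<exists>t\<in>{Suc b..c}. Uinst p q t > 0)"
  shows "tau_bound d p q {a..b} + tau_bound d p q {Suc b..c} \<le> tau_bound d p q {a..c}"
proof -
  let ?O = "Oinst p q" and ?U = "Uinst p q"
  have pointwise: "\<forall>t\<in>{a..c}. 0 \<le> ?U t \<and> ?U t \<le> Uinst p' q' t \<and> Uinst p' q' t \<le> ?O t"
    using sq unfolding squeezed_on_def Uinst_def Oinst_def by fastforce
  obtain t\<^sub>0 where "t\<^sub>0 \<in> {Suc b..c}" "Uinst p' q' t\<^sub>0 > 0" using assms(5) by blast
  moreover from this have "?O t\<^sub>0 > 0"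
    using pointwise \<open>a \<le> b\<close> by (meson atLeastAtMost_iff le_SucI le_trans less_le_trans)
  moreover have "\<forall>t\<in>{a..c}. 0 \<le> ?O t" using pointwise by fastforce
  ultimately have split: "opt d a b ?O + opt d (Suc b) c ?O \<le> opt d a c ?O + 1"
    using opt_split_le[OF d \<open>a \<le> b\<close> \<open>b < c\<close>] by blast
  have blocks: "{a..c} = {a..b} \<union> {Suc b..c}" using \<open>a \<le> b\<close> \<open>b < c\<close> by auto
  have vanishing: "?U t = 0" if "t \<in> {a..c}" "\<not> ?U t > 0" for t
    using that pointwise by force
  from assms(6) consider
      "\<not> (\<exists>t\<in>{a..b}. ?U t > 0)" "\<not> (\<exists>t\<in>{Suc b..c}. ?U t > 0)"
    | "\<not> (\<exists>t\<in>{a..b}. ?U t > 0)" "\<exists>t\<in>{Suc b..c}. ?U t > 0"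
    | "\<exists>t\<in>{a..b}. ?U t > 0" "\<not> (\<exists>t\<in>{Suc b..c}. ?U t > 0)"
    by blast
  then show ?thesis
  proof cases
    case 1
    then have "\<not> (\<exists>t\<in>{a..c}. ?U t > 0)" unfolding blocks by blast
    with 1 show ?thesis using split \<open>a \<le> b\<close> \<open>b < c\<close> by (simp add: tau_bound_def)
  next
    case 2
    then have "opt d a c ?U \<le> opt d (Suc b) c ?U"
      using vanishing \<open>a \<le> b\<close> by (intro opt_le_opt_if_vanishing_outside) auto
    moreover have "\<exists>t\<in>{a..c}. ?U t > 0" using 2 unfolding blocks by blast
    ultimately show ?thesis
      using 2 split \<open>a \<le> b\<close> \<open>b < c\<close> by (simp add: tau_bound_def tau_def)
  next
    case 3
    then have "opt d a c ?U \<le> opt d a b ?U"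
      using vanishing \<open>b < c\<close> by (intro opt_le_opt_if_vanishing_outside) auto
    moreover have "\<exists>t\<in>{a..c}. ?U t > 0" using 3 unfolding blocks by blast
    ultimately show ?thesis
      using 3 split \<open>a \<le> b\<close> \<open>b < c\<close> by (simp add: tau_bound_def tau_def)
  qed
qed

lemma eta_mono:
  assumes d: "d > 0" and sq: "squeezed_on {1..n} p' q' p q" and "\<exists>t\<in>{1..n}. Uinst p q t > 0"
  shows "eta d n p' q' \<le> eta d n p q"
proof -
  have "\<exists>t\<in>{1..n}. Uinst p' q' t > 0"
    using assms(3) sq unfolding squeezed_on_def by (meson less_le_trans)
  then obtain P' where P': "P' \<in> nonempty_partitions n (Uinst p' q')"
    and eta': "eta d n p' q' = (\<Sum>L\<in>P'. tau d L p' q')"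
    by (rule eta_attained)
  have merge: "tau_bound d p q {a..b} + tau_bound d p q {Suc b..c} \<le> tau_bound d p q {a..c}"
    if "1 \<le> a" "a \<le> b" "b < c" "c \<le> n" "\<exists>t\<in>{a..b}. Uinst p' q' t > 0"
      "\<exists>t\<in>{Suc b..c}. Uinst p' q' t > 0"
      "\<not> (\<exists>t\<in>{a..b}. Uinst p q t > 0) \<or> \<not> (\<exists>t\<in>{Suc b..c}. Uinst p q t > 0)" for a b c
  proof -
    have "squeezed_on {a..c} p' q' p q" using that(1,4) by (auto intro: squeezed_on_subset[OF sq])
    then show ?thesis using tau_bound_merge[OF d that(2,3)] that(6,7) by blast
  qed
  obtain P where P: "P \<in> nonempty_partitions n (Uinst p q)"
    and "sum (tau_bound d p q) P' \<le> sum (tau_bound d p q) P"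
    using nonempty_partition_merge[where h = "tau_bound d p q", OF merge assms(3) P'] by blast
  have "(\<Sum>L\<in>P'. tau d L p' q') \<le> sum (tau_bound d p q) P'"
  proof (rule sum_mono)
    fix L assume "L \<in> P'"
    then have "interval_partition n P'" "\<exists>t\<in>L. Uinst p' q' t > 0"
      using P' by (auto simp: nonempty_partitions_def)
    moreover obtain a b where "a \<le> b" "L = {a..b}"
      using interval_partition_interval[OF \<open>interval_partition n P'\<close> \<open>L \<in> P'\<close>] by blast
    moreover have "squeezed_on L p' q' p q"
      using interval_partition_subset[OF \<open>interval_partition n P'\<close> \<open>L \<in> P'\<close>]
      by (rule squeezed_on_subset[OF sq])
    ultimately show "tau d L p' q' \<le> tau_bound d p q L"
      using tau_le_tau_bound[OF d] by blast
  qed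
  also have "\<dots> \<le> sum (tau_bound d p q) P" by fact
  also have "\<dots> = (\<Sum>L\<in>P. tau d L p q)"
    using P by (intro sum.cong) (auto simp: nonempty_partitions_def tau_bound_def)
  also have "\<dots> \<le> eta d n p q" using P by (rule sum_tau_le_eta)
  finally show ?thesis using eta' by simp
qed

lemma abs_opt_diff_le_eta:
  assumes d: "d > 0" and nonneg: "\<forall>t\<in>{1..n}. 0 \<le> p t \<and> 0 \<le> q t"
    and "\<exists>t\<in>{1..n}. Uinst p q t > 0"
  shows "\<bar>opt d 1 n p - opt d 1 n q\<bar> \<le> eta d n p q"
proof -
  have "opt d 1 n r \<le> opt d 1 n (Oinst p q)" "opt d 1 n (Uinst p q) \<le> opt d 1 n r"
    if "r = p \<or> r = q" for r
    using that nonneg opt_mono[OF d, of 1 n] by (auto simp: Oinst_def Uinst_def)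
  moreover have "1 \<le> n" using assms(3) by auto
  ultimately have "\<bar>opt d 1 n p - opt d 1 n q\<bar> \<le> tau d {1..n} p q"
    by (fastforce simp: tau_def abs_le_iff)
  also have "\<dots> \<le> eta d n p q"
    using sum_tau_le_eta[OF whole_interval_nonempty_partition] assms(3) by fastforce
  finally show ?thesis .
qed

theorem mainTheorem4:
  fixes d :: real and n :: nat and p q :: "nat \<Rightarrow> real"
  assumes "d > 0"
    and "\<forall>t\<in>{1..n}. p t \<ge> 0 \<and> q t \<ge> 0"
    and "\<exists>t\<in>{1..n}. min (p t) (q t) > 0"
  shows "\<bar>opt d 1 n p - opt d 1 n q\<bar> \<le> eta d n p q \<and>
         (\<forall>S\<subseteq>{1..n}. eta d n p q \<ge> eta d n p (\<lambda>t. if t \<in> S then p t else q t))"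
proof -
  have U: "\<exists>t\<in>{1..n}. Uinst p q t > 0" using assms(3) by (simp add: Uinst_def)
  have "squeezed_on {1..n} p (\<lambda>t. if t \<in> S then p t else q t) p q" for S
    using assms(2) by (auto simp: squeezed_on_def Uinst_def Oinst_def)
  then show ?thesis
    using abs_opt_diff_le_eta[OF assms(1,2) U] eta_mono[OF assms(1) _ U] by blast
qed

end
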